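(* Let $\Gamma=(V,E)$ be a reflexive, locally finite, $k$-separable graph, and assume that either $V$ is infinite or $\alpha_k(\Gamma)\le\alpha_{-k}(\Gamma)$. Let $A$ be a $k$-atom of $\Gamma$ and let $F$ be a $k$-fragment of $\Gamma$ with $|A\cap F|\ge k$. Then $A\subseteq F$. In particular, two distinct $k$-atoms of $\Gamma$ intersect in at most $k-1$ elements.
   Context: A graph is a pair $\Gamma=(V,E)$ with $E\subseteq V\times V$; reflexive means $(x,x)\in E$ for all $x$; locally finite means each $\Gamma(x)=\{y:(x,y)\in E\}$ is finite. For $A\subseteq V$: $\Gamma(A)=\bigcup_{x\in A}\Gamma(x)$, $\partial(A)=\Gamma(A)\setminus A$. $\Gamma^{-1}=(V,E^{-1})$ is the reverse graph. $\Gamma$ is $k$-separable if some finite $X$ has $|X|\ge k$ and $|V\setminus\Gamma(X)|\ge k$; then $\kappa_k(\Gamma)=\min\{|\partial(X)|: X\text{ finite}, |X|\ge k, |V\setminus\Gamma(X)|\ge k\}$, a $k$-fragment is a finite $X$ with $|X|\ge k$, $|V\setminus\Gamma(X)|\ge k$ and $|\partial(X)|=\kappa_k(\Gamma)$, a $k$-atom is a $k$-fragment of minimum cardinality, and $\alpha_k(\Gamma)$ is the cardinality of a $k$-atom. $\alpha_{-k}(\Gamma)=\alpha_k(\Gamma^{-1})$. *)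

theory Defs
  imports Main
begin

definition nbhd :: "('a \<times> 'a) set \<Rightarrow> 'a \<Rightarrow> 'a set" where
  "nbhd E x = {y. (x, y) \<in> E}"

definition nbhd_set :: "('a \<times> 'a) set \<Rightarrow> 'a set \<Rightarrow> 'a set" where
  "nbhd_set E A = (\<Union>x\<in>A. nbhd E x)"

definition bdry :: "('a \<times> 'a) set \<Rightarrow> 'a set \<Rightarrow> 'a set" where
  "bdry E A = nbhd_set E A - A"

definition is_graph :: "'a set \<Rightarrow> ('a \<times> 'a) set \<Rightarrow> bool" where
  "is_graph V E \<longleftrightarrow> E \<subseteq> V \<times> V"

definition reflexive_graph :: "'a set \<Rightarrow> ('a \<times> 'a) set \<Rightarrow> bool" where
  "reflexive_graph V E \<longleftrightarrow> (\<forall>x\<in>V. (x, x) \<in> E)"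

definition locally_finite :: "'a set \<Rightarrow> ('a \<times> 'a) set \<Rightarrow> bool" where
  "locally_finite V E \<longleftrightarrow> (\<forall>x\<in>V. finite (nbhd E x))"

definition card_ge :: "nat \<Rightarrow> 'a set \<Rightarrow> bool" where
  "card_ge k S \<longleftrightarrow> infinite S \<or> k \<le> card S"

definition sep_sets :: "'a set \<Rightarrow> ('a \<times> 'a) set \<Rightarrow> nat \<Rightarrow> 'a set set" where
  "sep_sets V E k = {X. X \<subseteq> V \<and> finite X \<and> k \<le> card X \<and> card_ge k (V - nbhd_set E X)}"

definition k_separable :: "'a set \<Rightarrow> ('a \<times> 'a) set \<Rightarrow> nat \<Rightarrow> bool" where
  "k_separable V E k \<longleftrightarrow> sep_sets V E k \<noteq> {}"

definition kappa :: "'a set \<Rightarrow> ('a \<times> 'a) set \<Rightarrow> nat \<Rightarrow> nat" where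
  "kappa V E k = (LEAST n. \<exists>X\<in>sep_sets V E k. n = card (bdry E X))"

definition fragment :: "'a set \<Rightarrow> ('a \<times> 'a) set \<Rightarrow> nat \<Rightarrow> 'a set \<Rightarrow> bool" where
  "fragment V E k X \<longleftrightarrow> X \<in> sep_sets V E k \<and> card (bdry E X) = kappa V E k"

definition alpha :: "'a set \<Rightarrow> ('a \<times> 'a) set \<Rightarrow> nat \<Rightarrow> nat" where
  "alpha V E k = (LEAST n. \<exists>X. fragment V E k X \<and> n = card X)"

definition atom :: "'a set \<Rightarrow> ('a \<times> 'a) set \<Rightarrow> nat \<Rightarrow> 'a set \<Rightarrow> bool" where
  "atom V E k X \<longleftrightarrow> fragment V E k X \<and> card X = alpha V E k"

definition alpha_neg :: "'a set \<Rightarrow> ('a \<times> 'a) set \<Rightarrow> nat \<Rightarrow> nat" where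
  "alpha_neg V E k = alpha V (E\<inverse>) k"

end

theory Submission
  imports Defs
begin

(* The engine is submodularity of the boundary in a reflexive locally finite graph:
     |d(X \<union> Y)| + |d(X \<inter> Y)| \<le> |dX| + |dY|.
   Let A be a k-atom and F a k-fragment with |A \<inter> F| \<ge> k. Then A \<inter> F is admissible,
   so |d(A \<inter> F)| \<ge> \<kappa>_k and submodularity forces |d(A \<union> F)| \<le> \<kappa>_k.  If A \<union> F is
   admissible too, then also |d(A \<inter> F)| \<le> \<kappa>_k, so A \<inter> F is a fragment and minimality
   of the atom gives A \<subseteq> F.
   Admissibility of A \<union> F is automatic when V is infinite.  When V is finite we use
   duality: V - \<Gamma>(F) is a k-fragment of the reverse graph (the complement map sends
   admissible sets of \<Gamma> to admissible sets of \<Gamma>\<inverse> without enlarging boundaries, so both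
   graphs have the same \<kappa>_k), whence |A| \<le> \<alpha>_{-k} \<le> |V - \<Gamma>(F)|; a count then shows
   |V - \<Gamma>(A \<union> F)| \<ge> |A \<inter> F| \<ge> k. *)

lemma nbhd_set_mono: "X \<subseteq> Y \<Longrightarrow> nbhd_set E X \<subseteq> nbhd_set E Y"
  unfolding nbhd_set_def by auto

lemma nbhd_set_Un: "nbhd_set E (X \<union> Y) = nbhd_set E X \<union> nbhd_set E Y"
  unfolding nbhd_set_def by auto

lemma nbhd_set_subset: "is_graph V E \<Longrightarrow> nbhd_set E X \<subseteq> V"
  unfolding nbhd_set_def nbhd_def is_graph_def by auto

lemma subset_nbhd_set: "reflexive_graph V E \<Longrightarrow> X \<subseteq> V \<Longrightarrow> X \<subseteq> nbhd_set E X"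
  unfolding nbhd_set_def nbhd_def reflexive_graph_def by auto

lemma finite_nbhd_set:
  "locally_finite V E \<Longrightarrow> X \<subseteq> V \<Longrightarrow> finite X \<Longrightarrow> finite (nbhd_set E X)"
  unfolding nbhd_set_def locally_finite_def by auto

text \<open>In a reflexive graph \<Gamma>(X) is the disjoint union of X and its boundary.\<close>
lemma card_nbhd_set:
  assumes "reflexive_graph V E" "locally_finite V E" "X \<subseteq> V" "finite X"
  shows "card (nbhd_set E X) = card X + card (bdry E X)"
proof -
  have "X \<subseteq> nbhd_set E X" "finite (nbhd_set E X)"
    using subset_nbhd_set finite_nbhd_set assms by blast+
  then show ?thesis
    unfolding bdry_def using assms(4) by (simp add: card_Diff_subset card_mono)
qed

lemma bdry_submodular:
  assumes r: "reflexive_graph V E" and lf: "locally_finite V E"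
    and X: "X \<subseteq> V" "finite X" and Y: "Y \<subseteq> V" "finite Y"
  shows "card (bdry E (X \<union> Y)) + card (bdry E (X \<inter> Y)) \<le> card (bdry E X) + card (bdry E Y)"
proof -
  let ?G = "nbhd_set E"
  have fin: "finite (?G X)" "finite (?G Y)" using finite_nbhd_set lf X Y by blast+
  have "card (?G (X \<inter> Y)) \<le> card (?G X \<inter> ?G Y)"
    using fin by (intro card_mono) (auto intro: nbhd_set_mono[THEN subsetD])
  moreover have "card (?G X) + card (?G Y) = card (?G X \<union> ?G Y) + card (?G X \<inter> ?G Y)"
    using fin card_Un_Int by blast
  ultimately have "card (?G (X \<union> Y)) + card (?G (X \<inter> Y)) \<le> card (?G X) + card (?G Y)"
    by (simp add: nbhd_set_Un)
  moreover have "card X + card Y = card (X \<union> Y) + card (X \<inter> Y)"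
    using X Y card_Un_Int by blast
  ultimately show ?thesis
    using card_nbhd_set[OF r lf] X Y by (simp add: le_infI1)
qed

lemma card_ge_mono: "card_ge k S \<Longrightarrow> S \<subseteq> T \<Longrightarrow> card_ge k T"
  unfolding card_ge_def by (meson card_mono finite_subset le_trans)

lemma kappa_le: "X \<in> sep_sets V E k \<Longrightarrow> kappa V E k \<le> card (bdry E X)"
  unfolding kappa_def by (rule Least_le) blast

lemma kappa_attained:
  assumes "X \<in> sep_sets V E k"
  obtains Y where "Y \<in> sep_sets V E k" "card (bdry E Y) = kappa V E k"
proof -
  have "\<exists>n. \<exists>Y\<in>sep_sets V E k. n = card (bdry E Y)" using assms by blast
  then have "\<exists>Y\<in>sep_sets V E k. kappa V E k = card (bdry E Y)"
    unfolding kappa_def by (rule LeastI_ex)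
  then show ?thesis using that by auto
qed

lemma alpha_le: "fragment V E k X \<Longrightarrow> alpha V E k \<le> card X"
  unfolding alpha_def by (rule Least_le) blast

lemma sep_sets_subset:
  "X \<in> sep_sets V E k \<Longrightarrow> Y \<subseteq> X \<Longrightarrow> k \<le> card Y \<Longrightarrow> Y \<in> sep_sets V E k"
  unfolding sep_sets_def
  by (auto intro: card_ge_mono finite_subset dest: nbhd_set_mono[of Y X E])

lemma complement_sep_sets:
  assumes g: "is_graph V E" and fV: "finite V" and X: "X \<in> sep_sets V E k"
  shows "V - nbhd_set E X \<in> sep_sets V (E\<inverse>) k"
    and "bdry (E\<inverse>) (V - nbhd_set E X) \<subseteq> bdry E X"
proof -
  let ?C = "V - nbhd_set E X"
  have disj: "nbhd_set (E\<inverse>) ?C \<inter> X = {}"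
    unfolding nbhd_set_def nbhd_def by auto
  have "nbhd_set (E\<inverse>) ?C \<subseteq> V"
    using g unfolding nbhd_set_def nbhd_def is_graph_def by auto
  then show "bdry (E\<inverse>) ?C \<subseteq> bdry E X"
    using disj unfolding bdry_def by auto
  have "X \<subseteq> V - nbhd_set (E\<inverse>) ?C" "k \<le> card X" "X \<subseteq> V"
    using disj X unfolding sep_sets_def by auto
  then have "k \<le> card (V - nbhd_set (E\<inverse>) ?C)"
    using fV by (meson card_mono finite_Diff le_trans)
  then show "?C \<in> sep_sets V (E\<inverse>) k"
    using X fV unfolding sep_sets_def card_ge_def by auto
qed

lemma kappa_converse_le:
  assumes g: "is_graph V E" and fV: "finite V" and X: "X \<in> sep_sets V E k"
  shows "kappa V (E\<inverse>) k \<le> kappa V E k"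
proof -
  obtain Y where Y: "Y \<in> sep_sets V E k" "card (bdry E Y) = kappa V E k"
    using kappa_attained[OF X] .
  have "finite (bdry E Y)"
    using nbhd_set_subset[OF g] fV unfolding bdry_def by (meson finite_Diff finite_subset)
  then have "card (bdry (E\<inverse>) (V - nbhd_set E Y)) \<le> kappa V E k"
    using complement_sep_sets(2)[OF g fV Y(1)] Y(2) card_mono by metis
  then show ?thesis
    using kappa_le[OF complement_sep_sets(1)[OF g fV Y(1)]] by linarith
qed

lemma kappa_converse:
  assumes g: "is_graph V E" and fV: "finite V" and X: "X \<in> sep_sets V E k"
  shows "kappa V (E\<inverse>) k = kappa V E k"
proof -
  have "is_graph V (E\<inverse>)" using g unfolding is_graph_def by auto
  then have "kappa V ((E\<inverse>)\<inverse>) k \<le> kappa V (E\<inverse>) k"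
    using kappa_converse_le fV complement_sep_sets(1)[OF g fV X] by blast
  then show ?thesis using kappa_converse_le[OF g fV X] by simp
qed

text \<open>Hence the complement of \<Gamma>(F) is a fragment of the reverse graph, which bounds
  the size of reverse atoms.\<close>
lemma alpha_neg_le_complement:
  assumes g: "is_graph V E" and fV: "finite V" and F: "fragment V E k F"
  shows "alpha_neg V E k \<le> card (V - nbhd_set E F)"
proof -
  let ?C = "V - nbhd_set E F"
  have Fs: "F \<in> sep_sets V E k" "card (bdry E F) = kappa V E k"
    using F unfolding fragment_def by auto
  have Cs: "?C \<in> sep_sets V (E\<inverse>) k"
    using complement_sep_sets(1)[OF g fV Fs(1)] .
  have "finite (bdry E F)"
    using nbhd_set_subset[OF g] fV unfolding bdry_def by (meson finite_Diff finite_subset)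
  then have "card (bdry (E\<inverse>) ?C) \<le> kappa V (E\<inverse>) k"
    using complement_sep_sets(2)[OF g fV Fs(1)] Fs(2) kappa_converse[OF g fV Fs(1)]
    by (metis card_mono)
  then have "fragment V (E\<inverse>) k ?C"
    using kappa_le[OF Cs] Cs unfolding fragment_def by auto
  then show ?thesis unfolding alpha_neg_def by (rule alpha_le)
qed

context
  fixes V :: "'a set" and E :: "('a \<times> 'a) set" and k :: nat and A F :: "'a set"
  assumes g: "is_graph V E"
    and r: "reflexive_graph V E"
    and lf: "locally_finite V E"
    and alpha_cond: "infinite V \<or> alpha V E k \<le> alpha_neg V E k"
    and A: "atom V E k A"
    and F: "fragment V E k F"
    and large_meet: "k \<le> card (A \<inter> F)"
begin

text \<open>Unfolded membership facts; A \<inter> F is admissible because it is a large subset of A.\<close>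
lemma atom_fragment_facts:
  shows A_sep: "A \<in> sep_sets V E k" and A_bdry: "card (bdry E A) = kappa V E k"
    and A_card: "card A = alpha V E k"
    and F_sep: "F \<in> sep_sets V E k" and F_bdry: "card (bdry E F) = kappa V E k"
    and meet_sep: "A \<inter> F \<in> sep_sets V E k"
  using A F large_meet sep_sets_subset[of A V E k "A \<inter> F"]
  unfolding atom_def fragment_def by auto

lemma AF_finite: "A \<subseteq> V" "finite A" "F \<subseteq> V" "finite F"
  using A_sep F_sep unfolding sep_sets_def by auto

text \<open>Since A \<inter> F is admissible, submodularity bounds the boundary of A \<union> F by \<kappa>_k.\<close>
lemma bdry_union_le: "card (bdry E (A \<union> F)) + card (bdry E (A \<inter> F)) \<le> 2 * kappa V E k"
  using bdry_submodular[OF r lf AF_finite] A_bdry F_bdry by simp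

lemma union_outside_large: "card_ge k (V - nbhd_set E (A \<union> F))"
proof (cases "finite V")
  case False
  have "finite (nbhd_set E (A \<union> F))"
    using finite_nbhd_set[OF lf] AF_finite by simp
  then show ?thesis using False unfolding card_ge_def by auto
next
  case fV: True
  let ?G = "nbhd_set E"
  have "card A \<le> alpha_neg V E k" using alpha_cond fV A_card by simp
  also have "\<dots> \<le> card (V - ?G F)" using alpha_neg_le_complement[OF g fV F] .
  finally have A_le: "card (A - F) + card (A \<inter> F) \<le> card (V - ?G F)"
    using card_Int_Diff[of A F] AF_finite by simp
  have "card (bdry E (A \<union> F)) \<le> kappa V E k"
    using bdry_union_le kappa_le[OF meet_sep] by linarith
  moreover have "card (A \<union> F) = card (A - F) + card F"
    using AF_finite card_Un_disjoint[of "A - F" F] by (simp add: Un_Diff_cancel2 Int_commute)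
  ultimately have "card (?G (A \<union> F)) \<le> card (A - F) + card (?G F)"
    using card_nbhd_set[OF r lf] AF_finite F_bdry by simp
  moreover have "card V = card (V - ?G F) + card (?G F)"
    using nbhd_set_subset[OF g] fV by (metis card_Diff_subset card_mono finite_subset le_add_diff_inverse2)
  moreover have "card (V - ?G (A \<union> F)) = card V - card (?G (A \<union> F))"
    using nbhd_set_subset[OF g] fV by (meson card_Diff_subset finite_subset)
  ultimately show ?thesis
    using A_le large_meet unfolding card_ge_def by linarith
qed

text \<open>Both A \<inter> F and A \<union> F are admissible, so A \<inter> F is a fragment inside the atom A.\<close>
lemma atom_subset_fragment: "A \<subseteq> F"
proof -
  have "card (A \<inter> F) \<le> card (A \<union> F)"
    using AF_finite by (intro card_mono) auto
  then have "k \<le> card (A \<union> F)" using large_meet by linarith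
  then have "A \<union> F \<in> sep_sets V E k"
    using AF_finite union_outside_large unfolding sep_sets_def by auto
  then have "kappa V E k \<le> card (bdry E (A \<union> F))" by (rule kappa_le)
  then have "card (bdry E (A \<inter> F)) = kappa V E k"
    using bdry_union_le kappa_le[OF meet_sep] by linarith
  then have "fragment V E k (A \<inter> F)" using meet_sep unfolding fragment_def by auto
  then have "card A \<le> card (A \<inter> F)" using alpha_le A_card by metis
  then have "A \<inter> F = A" using AF_finite by (intro card_seteq) auto
  then show ?thesis by blast
qed

end

theorem mainTheorem4:
  fixes V :: "'a set" and E :: "('a \<times> 'a) set" and k :: nat and A F :: "'a set"
  assumes "is_graph V E"
    and "reflexive_graph V E"
    and "locally_finite V E"
    and "k_separable V E k"
    and "infinite V \<or> alpha V E k \<le> alpha_neg V E k"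
    and "atom V E k A"
    and "fragment V E k F"
    and "k \<le> card (A \<inter> F)"
  shows "A \<subseteq> F \<and>
         (\<forall>A1 A2. atom V E k A1 \<and> atom V E k A2 \<and> A1 \<noteq> A2 \<longrightarrow> card (A1 \<inter> A2) \<le> k - 1)"
proof
  note atom_in_fragment = atom_subset_fragment[OF assms(1-3,5)]
  show "A \<subseteq> F" using atom_in_fragment assms(6-8) .
  show "\<forall>A1 A2. atom V E k A1 \<and> atom V E k A2 \<and> A1 \<noteq> A2 \<longrightarrow> card (A1 \<inter> A2) \<le> k - 1"
  proof (intro allI impI)
    fix A1 A2 assume atoms: "atom V E k A1 \<and> atom V E k A2 \<and> A1 \<noteq> A2"
    show "card (A1 \<inter> A2) \<le> k - 1"
    proof (rule ccontr)
      assume "\<not> card (A1 \<inter> A2) \<le> k - 1"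
      then have "k \<le> card (A1 \<inter> A2)" "k \<le> card (A2 \<inter> A1)" by (auto simp: inf_commute)
      then have "A1 \<subseteq> A2" "A2 \<subseteq> A1"
        using atoms atom_in_fragment unfolding atom_def by blast+
      then show False using atoms by blast
    qed
  qed
qed

end
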